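(* Let $i\ge 1$ and let $p_1,\dots,p_i$ be primitive elements of ${\cal H}_R$. Then $$\tilde\Delta(p_i\top\cdots\top p_1)=\sum_{j=1}^{i-1}(p_i\top\cdots\top p_{j+1})\otimes(p_j\top\cdots\top p_1).$$
   Context: A rooted tree is a finite connected and simply connected graph with a distinguished vertex (the root), edges oriented away from the root; its weight is its number of vertices. ${\cal H}_R$ is the commutative polynomial algebra over $\mathbb{Q}$ on the isomorphism classes of rooted trees; monomials are forests ($1$ is the empty forest), the weight of a forest is its total number of vertices. An admissible cut $C$ of a tree $t$ is a nonempty set of edges such that every path from the root to a vertex contains at most one edge of $C$; removing them gives a forest in which $R^C(t)$ is the tree containing the root and $P^C(t)$ the product of the others. The coproduct is the algebra morphism $\Delta$ with $\Delta(t)=1\otimes t+t\otimes 1+\sum_{C}P^C(t)\otimes R^C(t)$ (sum over admissible cuts) on trees; $\tilde\Delta(x):=\Delta(x)-1\otimes x-x\otimes 1$, and $x$ is primitive iff $\tilde\Delta(x)=0$. For forests $M,N$: $M\top N=0$ if $N=1$, and otherwise $M\top N=\frac{1}{weight(N)}\sum_{v}N_v$, where $v$ runs over the vertices of $N$ and $N_v$ is the forest obtained from $N$ by attaching every tree of $M$ to $v$ (adding an edge from $v$ to the root of each tree of $M$); $\top$ is extended bilinearly to ${\cal H}_R\times{\cal H}_R$. Iterated products are nested to the left: $p_i\top\cdots\top p_1:=(p_i\top\cdots\top p_2)\top p_1$, and $p_1$ alone for $i=1$. *)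

theory Defs
  imports Complex_Main "HOL-Library.Multiset" "HOL-Library.Poly_Mapping" "HOL-Library.Product_Plus"
begin

text \<open>An isomorphism class of rooted trees is a root together with the (unordered)
  multiset of the isomorphism classes of its subtrees hanging from the root.\<close>
datatype tree = Node "tree multiset"

type_synonym forest = "tree multiset"

text \<open>The algebra H_R: commutative polynomial algebra over Q with the trees as variables;
  its basis consists of the forests (monomials), product of forests = disjoint union.\<close>
type_synonym H = "forest \<Rightarrow>\<^sub>0 rat"

text \<open>H_R tensor H_R, with basis the pairs of forests (M \<otimes> N).\<close>
type_synonym HH = "(forest \<times> forest) \<Rightarrow>\<^sub>0 rat"

primrec weight_tree :: "tree \<Rightarrow> nat" where
  "weight_tree (Node C) = 1 + sum_mset (image_mset weight_tree C)"

definition weight :: "forest \<Rightarrow> nat" where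
  "weight F = sum_mset (image_mset weight_tree F)"

text \<open>Cartesian product of a multiset of multisets (choosing one element from each).\<close>
definition mprod_step :: "'a multiset \<Rightarrow> 'a multiset multiset \<Rightarrow> 'a multiset multiset" where
  "mprod_step A X = \<Sum>\<^sub># (image_mset (\<lambda>a. image_mset (add_mset a) X) A)"

definition mprod :: "'a multiset multiset \<Rightarrow> 'a multiset multiset" where
  "mprod Ms = fold_mset mprod_step {#{#}#} Ms"

text \<open>cuts t: the multiset, over all admissible edge sets C of t
  INCLUDING the empty one, of the pairs (P^C(t), R^C(t)).  For every edge from the root
  to a child c, either this edge is cut (then, by admissibility, no edge below it is cut,
  and the whole subtree c goes to P), or it is not cut and the edges of c are an
  admissible (possibly empty) cut of c.\<close>
primrec cuts :: "tree \<Rightarrow> (forest \<times> tree) multiset" where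
  "cuts (Node C) =
     image_mset (\<lambda>S. (\<Sum>\<^sub># (image_mset fst S), Node (image_mset the (filter_mset (\<lambda>x. x \<noteq> None) (image_mset snd S)))))
       (mprod (image_mset (\<lambda>c. add_mset ({#c#}, None) (image_mset (\<lambda>(P, R). (P, Some R)) (cuts c))) C))"

definition forest :: "forest \<Rightarrow> H" where
  "forest F = Poly_Mapping.single F 1"

definition scal :: "rat \<Rightarrow> ('a \<Rightarrow>\<^sub>0 rat) \<Rightarrow> ('a \<Rightarrow>\<^sub>0 rat)" where
  "scal a x = Poly_Mapping.map (\<lambda>c. a * c) x"

definition tensor :: "H \<Rightarrow> H \<Rightarrow> HH" where
  "tensor x y = (\<Sum>M\<in>Poly_Mapping.keys x. \<Sum>N\<in>Poly_Mapping.keys y.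
      Poly_Mapping.single (M, N) (Poly_Mapping.lookup x M * Poly_Mapping.lookup y N))"

text \<open>On a tree: 1\<otimes>t + t\<otimes>1 + sum over nonempty admissible cuts of P^C(t)\<otimes>R^C(t).
  The nonempty cuts are exactly those with P^C(t) \<noteq> 1.\<close>
definition Delta_tree :: "tree \<Rightarrow> HH" where
  "Delta_tree t = Poly_Mapping.single ({#}, {#t#}) 1 + Poly_Mapping.single ({#t#}, {#}) 1
     + (\<Sum>(P, R) \<in># filter_mset (\<lambda>(P, R). P \<noteq> {#}) (cuts t). Poly_Mapping.single (P, {#R#}) 1)"

definition Delta_forest :: "forest \<Rightarrow> HH" where
  "Delta_forest F = prod_mset (image_mset Delta_tree F)"

definition Delta :: "H \<Rightarrow> HH" where
  "Delta x = (\<Sum>F\<in>Poly_Mapping.keys x. scal (Poly_Mapping.lookup x F) (Delta_forest F))"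

definition rDelta :: "H \<Rightarrow> HH" where
  "rDelta x = Delta x - tensor 1 x - tensor x 1"

definition primitive :: "H \<Rightarrow> bool" where
  "primitive x \<longleftrightarrow> rDelta x = 0"

text \<open>graft_tree M t: multiset over the vertices v of t of the tree obtained
  by attaching every tree of M to v.\<close>
primrec graft_tree :: "forest \<Rightarrow> tree \<Rightarrow> tree multiset" where
  "graft_tree M (Node C) = add_mset (Node (C + M))
     (\<Sum>\<^sub># (image_mset (\<lambda>c. image_mset (\<lambda>t'. Node (add_mset t' (C - {#c#}))) (graft_tree M c)) C))"

text \<open>Multiset over the vertices v of the forest N of the forests N_v.\<close>
definition graft :: "forest \<Rightarrow> forest \<Rightarrow> forest multiset" where
  "graft M N = \<Sum>\<^sub># (image_mset (\<lambda>t. image_mset (\<lambda>t'. add_mset t' (N - {#t#})) (graft_tree M t)) N)"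

definition top_forest :: "forest \<Rightarrow> forest \<Rightarrow> H" where
  "top_forest M N = (if N = {#} then 0
     else scal (1 / of_nat (weight N)) (\<Sum>N'\<in>#graft M N. forest N'))"

definition top :: "H \<Rightarrow> H \<Rightarrow> H" where
  "top x y = (\<Sum>M\<in>Poly_Mapping.keys x. \<Sum>N\<in>Poly_Mapping.keys y. scal (Poly_Mapping.lookup x M * Poly_Mapping.lookup y N) (top_forest M N))"

text \<open>itop p k n = p_(k+n) top ... top p_k, nested to the left:
  p_(k+n) top ... top p_k = (p_(k+n) top ... top p_(k+1)) top p_k.\<close>
fun itop :: "(nat \<Rightarrow> H) \<Rightarrow> nat \<Rightarrow> nat \<Rightarrow> H" where
  "itop p k 0 = p k"
| "itop p k (Suc n) = top (itop p (Suc k) n) (p k)"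

end

theory Submission
  imports Defs
begin

(* Let g_M(N) be the sum, over the vertices v of the forest N, of N_v, the forest M grafted
   onto v. Then x \<top> y = \<Sum>_M x_M g_M(y/|y|), where y/|y| divides every forest of y by its
   weight. Each g_M is a derivation, and following a cut of a grafted tree one finds
     \<Delta>(g_M y) = \<Sum> M'y' \<otimes> g_M''(y'') + (g_M \<otimes> id)(\<Delta>y),
   summed over \<Delta>M = \<Sum> M' \<otimes> M'' and \<Delta>y = \<Sum> y' \<otimes> y'': either the grafting vertex stays in
   the root part and M is cut as well, or the vertex is pruned together with all of M.
   Since \<Delta> preserves weight, y/|y| is primitive when y is; a primitive has no constant term,
   and grafting the empty forest multiplies a forest by its weight, so g_1(y/|y|) = y.
   For primitive p this gives
     \<Delta>~(x \<top> p) = x \<otimes> p + (id \<otimes> (- \<top> p))(\<Delta>~x),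
   and the formula follows by induction on i. *)

section \<open>Linear maps between spaces of finitely supported rational functions\<close>

lemma lookup_scal [simp]: "Poly_Mapping.lookup (scal c x) k = c * Poly_Mapping.lookup x k"
  unfolding scal_def by (simp add: Poly_Mapping.map.rep_eq when_def)

lemma scal_add_right: "scal c (x + y) = scal c x + scal c y"
  by (rule poly_mapping_eqI) (simp add: lookup_add algebra_simps)

lemma scal_add_left: "scal (a + b) x = scal a x + scal b x"
  by (rule poly_mapping_eqI) (simp add: lookup_add algebra_simps)

lemma scal_scal [simp]: "scal a (scal b x) = scal (a * b) x"
  by (rule poly_mapping_eqI) simp

lemma scal_0_left [simp]: "scal 0 x = 0"
  by (rule poly_mapping_eqI) simp

lemma scal_0_right [simp]: "scal c 0 = 0"
  by (rule poly_mapping_eqI) simp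

lemma scal_1 [simp]: "scal 1 x = x"
  by (rule poly_mapping_eqI) simp

lemma scal_single [simp]: "scal c (Poly_Mapping.single k d) = Poly_Mapping.single k (c * d)"
  by (rule poly_mapping_eqI) (simp add: lookup_single when_def)

lemma scal_sum: "scal c (sum f A) = (\<Sum>a\<in>A. scal c (f a))"
  by (induction A rule: infinite_finite_induct) (auto simp: scal_add_right)

lemma keys_scal: "Poly_Mapping.keys (scal c x) \<subseteq> Poly_Mapping.keys x"
  by (auto simp: in_keys_iff)

lemma scal_mult_left: "scal c (x * y) = scal c x * (y :: 'a::comm_monoid_add \<Rightarrow>\<^sub>0 rat)"
  by (simp add: scal_def mult_map_scale_conv_mult mult.assoc)

lemma scal_mult_right: "scal c (x * y) = x * scal c (y :: 'a::comm_monoid_add \<Rightarrow>\<^sub>0 rat)"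
  by (simp add: scal_def mult_map_scale_conv_mult mult.left_commute)

definition lin_ext :: "('a \<Rightarrow> ('b \<Rightarrow>\<^sub>0 rat)) \<Rightarrow> ('a \<Rightarrow>\<^sub>0 rat) \<Rightarrow> ('b \<Rightarrow>\<^sub>0 rat)" where
  "lin_ext f x = (\<Sum>k\<in>Poly_Mapping.keys x. scal (Poly_Mapping.lookup x k) (f k))"

definition is_linear :: "(('a \<Rightarrow>\<^sub>0 rat) \<Rightarrow> ('b \<Rightarrow>\<^sub>0 rat)) \<Rightarrow> bool" where
  "is_linear F \<longleftrightarrow> (\<forall>x y. F (x + y) = F x + F y) \<and> (\<forall>c x. F (scal c x) = scal c (F x))"

lemma lin_ext_superset:
  assumes "finite S" "Poly_Mapping.keys x \<subseteq> S"
  shows "lin_ext f x = (\<Sum>k\<in>S. scal (Poly_Mapping.lookup x k) (f k))"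
  unfolding lin_ext_def
  by (rule sum.mono_neutral_left) (use assms in \<open>auto simp: in_keys_iff\<close>)

lemma lin_ext_add: "lin_ext f (x + y) = lin_ext f x + lin_ext f y"
proof -
  let ?S = "Poly_Mapping.keys x \<union> Poly_Mapping.keys y"
  have "lin_ext f (x + y) = (\<Sum>k\<in>?S. scal (Poly_Mapping.lookup (x + y) k) (f k))"
    by (rule lin_ext_superset) (auto simp: keys_add)
  also have "\<dots> = (\<Sum>k\<in>?S. scal (Poly_Mapping.lookup x k) (f k))
      + (\<Sum>k\<in>?S. scal (Poly_Mapping.lookup y k) (f k))"
    by (simp add: lookup_add scal_add_left sum.distrib)
  also have "\<dots> = lin_ext f x + lin_ext f y"
    using lin_ext_superset[of ?S x f] lin_ext_superset[of ?S y f] by simp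
  finally show ?thesis .
qed

lemma lin_ext_scal: "lin_ext f (scal c x) = scal c (lin_ext f x)"
proof -
  have "lin_ext f (scal c x)
      = (\<Sum>k\<in>Poly_Mapping.keys x. scal (Poly_Mapping.lookup (scal c x) k) (f k))"
    by (rule lin_ext_superset) (auto simp: keys_scal)
  then show ?thesis by (simp add: lin_ext_def scal_sum)
qed

lemma is_linear_lin_ext [simp]: "is_linear (lin_ext f)"
  by (simp add: is_linear_def lin_ext_add lin_ext_scal)

lemma lin_ext_single [simp]: "lin_ext f (Poly_Mapping.single k c) = scal c (f k)"
  by (cases "c = 0") (simp_all add: lin_ext_def)

lemma lin_ext_cong: "(\<And>k. k \<in> Poly_Mapping.keys x \<Longrightarrow> f k = g k) \<Longrightarrow> lin_ext f x = lin_ext g x"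
  by (simp add: lin_ext_def)

lemma lin_ext_fun_add: "lin_ext (\<lambda>k. f k + g k) x = lin_ext f x + lin_ext g x"
  by (simp add: lin_ext_def scal_add_right sum.distrib)

lemma lin_ext_fun_scal: "lin_ext (\<lambda>k. scal c (f k)) x = scal c (lin_ext f x)"
  by (simp add: lin_ext_def scal_sum mult.commute)

lemma lin_ext_single_1: "lin_ext (\<lambda>k. Poly_Mapping.single k 1) x = x"
  by (rule poly_mapping_eqI) (simp add: lin_ext_def lookup_sum lookup_single when_def in_keys_iff)

lemma lookup_lin_ext: "Poly_Mapping.lookup (lin_ext f x) k
    = (\<Sum>a\<in>Poly_Mapping.keys x. Poly_Mapping.lookup x a * Poly_Mapping.lookup (f a) k)"
  by (simp add: lin_ext_def lookup_sum)

lemma is_linear_add: "is_linear F \<Longrightarrow> F (x + y) = F x + F y"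
  by (simp add: is_linear_def)

lemma is_linear_scal: "is_linear F \<Longrightarrow> F (scal c x) = scal c (F x)"
  by (simp add: is_linear_def)

lemma is_linear_0: "is_linear F \<Longrightarrow> F 0 = 0"
  using is_linear_scal[of F 0 0] by simp

lemma is_linear_diff: "is_linear F \<Longrightarrow> F (x - y) = F x - F y"
  using is_linear_add[of F "x - y" y] by (simp add: algebra_simps)

lemma is_linear_sum: "is_linear F \<Longrightarrow> F (sum g A) = (\<Sum>a\<in>A. F (g a))"
  by (induction A rule: infinite_finite_induct) (simp_all add: is_linear_0 is_linear_add)

lemma is_linear_sum_mset: "is_linear F \<Longrightarrow> F (\<Sum>a\<in>#A. g a) = (\<Sum>a\<in>#A. F (g a))"
  by (induction A) (simp_all add: is_linear_0 is_linear_add)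

lemma is_linear_eq_lin_ext:
  assumes "is_linear F"
  shows "F x = lin_ext (\<lambda>k. F (Poly_Mapping.single k 1)) x"
proof -
  have "F x = F (\<Sum>k\<in>Poly_Mapping.keys x. scal (Poly_Mapping.lookup x k) (Poly_Mapping.single k 1))"
    using lin_ext_single_1[of x] by (simp add: lin_ext_def)
  also have "\<dots> = lin_ext (\<lambda>k. F (Poly_Mapping.single k 1)) x"
    by (simp add: lin_ext_def is_linear_sum[OF assms] is_linear_scal[OF assms] del: scal_single)
  finally show ?thesis .
qed

lemma is_linear_eqI:
  assumes "is_linear F" "is_linear G" "\<And>k. F (Poly_Mapping.single k 1) = G (Poly_Mapping.single k 1)"
  shows "F x = G x"
proof -
  have "F x = lin_ext (\<lambda>k. F (Poly_Mapping.single k 1)) x"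
    by (rule is_linear_eq_lin_ext[OF assms(1)])
  also have "\<dots> = lin_ext (\<lambda>k. G (Poly_Mapping.single k 1)) x"
    by (simp only: assms(3))
  also have "\<dots> = G x"
    by (rule is_linear_eq_lin_ext[OF assms(2), symmetric])
  finally show ?thesis .
qed

lemma is_bilinear_eqI:
  assumes "\<And>y. is_linear (\<lambda>x. F x y)" "\<And>x. is_linear (F x)"
    and "\<And>y. is_linear (\<lambda>x. G x y)" "\<And>x. is_linear (G x)"
    and "\<And>a b. F (Poly_Mapping.single a 1) (Poly_Mapping.single b 1)
               = G (Poly_Mapping.single a 1) (Poly_Mapping.single b 1)"
  shows "F x y = G x y"
proof -
  have "F (Poly_Mapping.single a 1) y = G (Poly_Mapping.single a 1) y" for a
    by (rule is_linear_eqI[OF assms(2,4,5)])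
  then show ?thesis
    using is_linear_eqI[where F = "\<lambda>x. F x y" and G = "\<lambda>x. G x y", OF assms(1,3)] by blast
qed

lemma is_linear_id: "is_linear id"
  by (simp add: is_linear_def)

lemma is_linear_const_0: "is_linear (\<lambda>x. 0)"
  by (simp add: is_linear_def)

lemma is_linear_compose: "is_linear F \<Longrightarrow> is_linear G \<Longrightarrow> is_linear (\<lambda>x. F (G x))"
  by (simp add: is_linear_def)

lemma is_linear_compose_add: "is_linear F \<Longrightarrow> is_linear G \<Longrightarrow> is_linear (\<lambda>x. F x + G x)"
  by (simp add: is_linear_def scal_add_right algebra_simps)

lemma is_linear_mult_left: "is_linear (\<lambda>x. x * (y :: 'a::comm_monoid_add \<Rightarrow>\<^sub>0 rat))"
  by (simp add: is_linear_def distrib_right scal_mult_left)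

lemma is_linear_mult_right: "is_linear (\<lambda>x. (y :: 'a::comm_monoid_add \<Rightarrow>\<^sub>0 rat) * x)"
  by (simp add: is_linear_def distrib_left scal_mult_right)

section \<open>Tensor products and the coproduct\<close>

lemma tensor_lin_ext: "tensor x y = lin_ext (\<lambda>M. lin_ext (\<lambda>N. Poly_Mapping.single (M, N) 1) y) x"
  unfolding tensor_def lin_ext_def by (simp add: scal_sum)

lemma is_linear_tensor_left: "is_linear (\<lambda>x. tensor x y)"
  unfolding tensor_lin_ext by (rule is_linear_lin_ext)

lemma is_linear_tensor_right: "is_linear (tensor x)"
  by (simp add: is_linear_def tensor_lin_ext lin_ext_add lin_ext_scal lin_ext_fun_add lin_ext_fun_scal)

lemma tensor_single [simp]:
  "tensor (Poly_Mapping.single a c) (Poly_Mapping.single b d) = Poly_Mapping.single (a, b) (c * d)"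
  by (simp add: tensor_lin_ext)

lemma tensor_forest [simp]: "tensor (forest A) (forest B) = Poly_Mapping.single (A, B) 1"
  by (simp add: forest_def)

lemma tensor_0_left [simp]: "tensor 0 y = 0"
  by (rule is_linear_0[OF is_linear_tensor_left])

lemma tensor_0_right [simp]: "tensor x 0 = 0"
  by (rule is_linear_0[OF is_linear_tensor_right])

lemma tensor_add_left: "tensor (x + y) z = tensor x z + tensor y z"
  by (rule is_linear_add[OF is_linear_tensor_left])

lemma tensor_add_right: "tensor z (x + y) = tensor z x + tensor z y"
  by (rule is_linear_add[OF is_linear_tensor_right])

lemma tensor_scal_left: "tensor (scal c x) z = scal c (tensor x z)"
  by (rule is_linear_scal[OF is_linear_tensor_left])

lemma tensor_scal_right: "tensor z (scal c x) = scal c (tensor z x)"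
  by (rule is_linear_scal[OF is_linear_tensor_right])

lemma one_H_eq_forest: "(1 :: H) = forest {#}"
  by (simp add: forest_def)

lemma one_HH_eq_single: "(1 :: HH) = Poly_Mapping.single ({#}, {#}) 1"
  by (metis single_one zero_prod_def)

lemma tensor_single_one: "tensor (Poly_Mapping.single A c) 1 = Poly_Mapping.single (A, {#}) c"
  by (simp only: one_H_eq_forest forest_def tensor_single mult_1_right)

lemma tensor_one_single: "tensor 1 (Poly_Mapping.single A c) = Poly_Mapping.single ({#}, A) c"
  by (simp only: one_H_eq_forest forest_def tensor_single mult_1)

lemma tensor_one_one: "tensor 1 1 = 1"
  by (simp only: one_H_eq_forest one_HH_eq_single forest_def tensor_single mult_1)

lemma forest_mult: "forest A * forest B = forest (A + B)"
  by (simp add: forest_def mult_single)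

lemma tensor_mult: "tensor x y * tensor u v = tensor (x * u) ((y * v) :: H)"
proof -
  have basis: "tensor (Poly_Mapping.single a 1) y * tensor (Poly_Mapping.single c 1) v
      = tensor (Poly_Mapping.single a 1 * Poly_Mapping.single c 1) (y * v)" for a c and y v :: H
    by (rule is_bilinear_eqI[where F = "\<lambda>y v. tensor (Poly_Mapping.single a 1) y * tensor (Poly_Mapping.single c 1) v"])
      (simp_all add: mult_single
        is_linear_compose[OF is_linear_mult_left is_linear_tensor_right]
        is_linear_compose[OF is_linear_mult_right is_linear_tensor_right]
        is_linear_compose[OF is_linear_tensor_right is_linear_mult_left]
        is_linear_compose[OF is_linear_tensor_right is_linear_mult_right])
  show ?thesis
    by (rule is_bilinear_eqI[where F = "\<lambda>x u. tensor x y * tensor u v"])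
      (simp_all add: basis
        is_linear_compose[OF is_linear_mult_left is_linear_tensor_left]
        is_linear_compose[OF is_linear_mult_right is_linear_tensor_left]
        is_linear_compose[OF is_linear_tensor_left is_linear_mult_left]
        is_linear_compose[OF is_linear_tensor_left is_linear_mult_right])
qed

definition tensor_map :: "(H \<Rightarrow> H) \<Rightarrow> (H \<Rightarrow> H) \<Rightarrow> HH \<Rightarrow> HH" where
  "tensor_map f g = lin_ext (\<lambda>(A, B). tensor (f (forest A)) (g (forest B)))"

lemma is_linear_tensor_map: "is_linear (tensor_map f g)"
  unfolding tensor_map_def by (rule is_linear_lin_ext)

lemma tensor_map_single [simp]:
  "tensor_map f g (Poly_Mapping.single (A, B) 1) = tensor (f (forest A)) (g (forest B))"
  by (simp add: tensor_map_def)

lemma tensor_map_tensor: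
  assumes "is_linear f" "is_linear g"
  shows "tensor_map f g (tensor u v) = tensor (f u) (g v)"
proof (rule is_bilinear_eqI[where F = "\<lambda>u v. tensor_map f g (tensor u v)"])
  show "is_linear (\<lambda>u. tensor_map f g (tensor u v))" "is_linear (\<lambda>v. tensor_map f g (tensor u v))"
    "is_linear (\<lambda>u. tensor (f u) v)" "is_linear (\<lambda>v. tensor (f u) (g v))" for u v
    by (simp_all add: is_linear_compose[OF is_linear_tensor_map is_linear_tensor_left]
        is_linear_compose[OF is_linear_tensor_map is_linear_tensor_right]
        is_linear_compose[OF is_linear_tensor_left assms(1)]
        is_linear_compose[OF is_linear_tensor_right assms(2)])
qed (simp add: forest_def)

lemma tensor_map_compose:
  assumes "is_linear f" "is_linear g" "is_linear f'" "is_linear g'"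
  shows "tensor_map f g (tensor_map f' g' X) = tensor_map (\<lambda>x. f (f' x)) (\<lambda>x. g (g' x)) X"
  by (rule is_linear_eqI[OF is_linear_compose[OF is_linear_tensor_map is_linear_tensor_map]
        is_linear_tensor_map])
    (auto simp: tensor_map_tensor assms)

lemma Delta_lin_ext: "Delta = lin_ext Delta_forest"
  by (simp add: fun_eq_iff Delta_def lin_ext_def)

lemma is_linear_Delta: "is_linear Delta"
  by (simp add: Delta_lin_ext)

lemma Delta_single [simp]: "Delta (Poly_Mapping.single F c) = scal c (Delta_forest F)"
  by (simp add: Delta_lin_ext)

lemma Delta_forest: "Delta (forest F) = Delta_forest F"
  by (simp add: forest_def)

lemma Delta_forest_empty [simp]: "Delta_forest {#} = 1"
  by (simp add: Delta_forest_def)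

lemma Delta_forest_union: "Delta_forest (A + B) = Delta_forest A * Delta_forest B"
  by (simp add: Delta_forest_def)

lemma Delta_forest_add_mset: "Delta_forest (add_mset t F) = Delta_tree t * Delta_forest F"
  by (simp add: Delta_forest_def)

lemma Delta_mult: "Delta (x * y) = Delta x * Delta y"
  by (rule is_bilinear_eqI[where F = "\<lambda>x y. Delta (x * y)"])
    (simp_all add: mult_single Delta_forest_union
      is_linear_compose[OF is_linear_Delta is_linear_mult_left]
      is_linear_compose[OF is_linear_Delta is_linear_mult_right]
      is_linear_compose[OF is_linear_mult_left is_linear_Delta]
      is_linear_compose[OF is_linear_mult_right is_linear_Delta])

lemma Delta_eq_rDelta: "Delta x = rDelta x + tensor 1 x + tensor x 1"
  by (simp add: rDelta_def)

lemma Delta_primitive: "primitive q \<Longrightarrow> Delta q = tensor 1 q + tensor q 1"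
  by (simp add: Delta_eq_rDelta primitive_def)

section \<open>Admissible cuts and the cocycle property of B+\<close>

definition B_plus :: "H \<Rightarrow> H" where
  "B_plus = lin_ext (\<lambda>F. forest {#Node F#})"

lemma is_linear_B_plus: "is_linear B_plus"
  unfolding B_plus_def by (rule is_linear_lin_ext)

lemma B_plus_single [simp]: "B_plus (Poly_Mapping.single F c) = Poly_Mapping.single {#Node F#} c"
  by (simp add: B_plus_def forest_def)

lemma B_plus_forest [simp]: "B_plus (forest F) = forest {#Node F#}"
  by (simp add: forest_def)

lemma image_mset_sum_mset: "image_mset f (\<Sum>b\<in>#B. g b) = (\<Sum>b\<in>#B. image_mset f (g b))"
  by (induction B) auto

lemma sum_mset_sum_mset_image: "(\<Sum>x\<in>#(\<Sum>a\<in>#A. g a). f x) = (\<Sum>a\<in>#A. \<Sum>x\<in>#g a. f x)"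
  by (induction A) auto

lemma mprod_step_commute: "mprod_step A (mprod_step B X) = mprod_step B (mprod_step A X)"
proof -
  have "mprod_step A (mprod_step B X) = (\<Sum>a\<in>#A. \<Sum>b\<in>#B. image_mset (\<lambda>S. add_mset a (add_mset b S)) X)"
    by (simp add: mprod_step_def image_mset_sum_mset image_mset.compositionality o_def)
  also have "\<dots> = (\<Sum>b\<in>#B. \<Sum>a\<in>#A. image_mset (\<lambda>S. add_mset a (add_mset b S)) X)"
    by (rule sum_mset.swap)
  also have "\<dots> = mprod_step B (mprod_step A X)"
    by (simp add: mprod_step_def image_mset_sum_mset image_mset.compositionality o_def add_mset_commute)
  finally show ?thesis .
qed

lemma mprod_add_mset: "mprod (add_mset A Ms) = mprod_step A (mprod Ms)"
proof -
  interpret comp_fun_commute mprod_step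
    by unfold_locales (simp add: fun_eq_iff mprod_step_commute)
  show ?thesis by (simp add: mprod_def)
qed

lemma sum_mset_mprod_single:
  fixes \<phi> :: "'a \<Rightarrow> forest \<times> forest"
  shows "(\<Sum>S\<in>#mprod (image_mset h D). Poly_Mapping.single (\<Sum>b\<in>#S. \<phi> b) (1::rat))
        = (\<Prod>c\<in>#D. \<Sum>b\<in>#h c. Poly_Mapping.single (\<phi> b) 1)"
proof (induction D)
  case empty
  then show ?case by (simp add: mprod_def)
next
  case (add c D)
  let ?X = "mprod (image_mset h D)"
  have "(\<Sum>S\<in>#mprod (image_mset h (add_mset c D)). Poly_Mapping.single (\<Sum>b\<in>#S. \<phi> b) (1::rat))
      = (\<Sum>a\<in>#h c. \<Sum>S\<in>#?X. Poly_Mapping.single (\<phi> a) 1 * Poly_Mapping.single (\<Sum>b\<in>#S. \<phi> b) (1::rat))"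
    by (simp add: mprod_add_mset mprod_step_def sum_mset_sum_mset_image image_mset.compositionality
        o_def mult_single)
  also have "\<dots> = (\<Sum>a\<in>#h c. Poly_Mapping.single (\<phi> a) 1)
      * (\<Sum>S\<in>#?X. Poly_Mapping.single (\<Sum>b\<in>#S. \<phi> b) (1::rat))"
    by (simp add: sum_mset_distrib_left sum_mset_distrib_right sum_mset.swap[where B = ?X])
  finally show ?case
    using add by simp
qed

definition mset_option :: "'a option \<Rightarrow> 'a multiset" where
  "mset_option x = (case x of None \<Rightarrow> {#} | Some a \<Rightarrow> {#a#})"

lemma the_filter_not_None:
  "image_mset the (filter_mset (\<lambda>x. x \<noteq> None) (image_mset snd S)) = (\<Sum>b\<in>#S. mset_option (snd b))"
  by (induction S) (auto simp: mset_option_def split: option.split)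

definition cut_sum :: "tree \<Rightarrow> HH" where
  "cut_sum t = (\<Sum>(P, R)\<in>#cuts t. Poly_Mapping.single (P, {#R#}) 1)"

lemma cut_sum_Node:
  "cut_sum (Node C)
     = tensor_map id B_plus (\<Prod>c\<in>#C. Poly_Mapping.single ({#c#}, {#}) 1 + cut_sum c)"
proof -
  define choices where
    "choices c = add_mset ({#c#}, None) (image_mset (\<lambda>(P, R). (P, Some R)) (cuts c))" for c
  define \<phi> where "\<phi> b = (fst b, mset_option (snd b))" for b :: "forest \<times> tree option"
  have "cut_sum (Node C) = (\<Sum>S\<in>#mprod (image_mset choices C).
      Poly_Mapping.single (\<Sum>\<^sub># (image_mset fst S), {#Node (\<Sum>b\<in>#S. mset_option (snd b))#}) 1)"
  proof -
    have "cuts (Node C) = image_mset (\<lambda>S. (\<Sum>\<^sub># (image_mset fst S), Node (\<Sum>b\<in>#S. mset_option (snd b))))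
        (mprod (image_mset choices C))"
      by (simp only: cuts.simps the_filter_not_None choices_def[abs_def])
    then show ?thesis
      by (simp add: cut_sum_def image_mset.compositionality o_def)
  qed
  also have "\<dots> = (\<Sum>S\<in>#mprod (image_mset choices C).
      tensor_map id B_plus (Poly_Mapping.single (\<Sum>b\<in>#S. \<phi> b) 1))"
  proof -
    have "fst (\<Sum>b\<in>#S. \<phi> b) = \<Sum>\<^sub># (image_mset fst S)"
      "snd (\<Sum>b\<in>#S. \<phi> b) = (\<Sum>b\<in>#S. mset_option (snd b))" for S
      by (induction S) (auto simp: \<phi>_def)
    then show ?thesis
      by (metis (no_types, lifting) B_plus_forest prod.collapse tensor_forest tensor_map_single id_apply)
  qed
  also have "\<dots> = tensor_map id B_plus (\<Prod>c\<in>#C. \<Sum>b\<in>#choices c. Poly_Mapping.single (\<phi> b) 1)"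
    by (simp only: sum_mset_mprod_single[symmetric] is_linear_sum_mset[OF is_linear_tensor_map])
  also have "(\<Prod>c\<in>#C. \<Sum>b\<in>#choices c. Poly_Mapping.single (\<phi> b) 1)
      = (\<Prod>c\<in>#C. Poly_Mapping.single ({#c#}, {#}) 1 + cut_sum c)"
    by (simp add: choices_def \<phi>_def mset_option_def cut_sum_def image_mset.compositionality o_def case_prod_unfold)
  finally show ?thesis .
qed

(* Singles out the empty cut, the only admissible cut with empty pruned part. *)
definition empty_left_part :: "HH \<Rightarrow> HH" where
  "empty_left_part = lin_ext (\<lambda>(P, R). if P = {#} then Poly_Mapping.single (P, R) 1 else 0)"

lemma is_linear_empty_left_part: "is_linear empty_left_part"
  unfolding empty_left_part_def by (rule is_linear_lin_ext)

lemma empty_left_part_single: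
  "empty_left_part (Poly_Mapping.single (P, R) c) = (if P = {#} then Poly_Mapping.single (P, R) c else 0)"
  by (simp add: empty_left_part_def)

lemma empty_left_part_mult: "empty_left_part (X * Y) = empty_left_part X * empty_left_part Y"
  by (rule is_bilinear_eqI[where F = "\<lambda>X Y. empty_left_part (X * Y)"])
    (auto simp: mult_single empty_left_part_single
      is_linear_compose[OF is_linear_empty_left_part is_linear_mult_left]
      is_linear_compose[OF is_linear_empty_left_part is_linear_mult_right]
      is_linear_compose[OF is_linear_mult_left is_linear_empty_left_part]
      is_linear_compose[OF is_linear_mult_right is_linear_empty_left_part])

lemma empty_left_part_prod_mset:
  "empty_left_part (\<Prod>c\<in>#D. f c) = (\<Prod>c\<in>#D. empty_left_part (f c))"
  by (induction D) (simp_all add: empty_left_part_mult one_HH_eq_single empty_left_part_single)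

lemma empty_left_part_tensor_map_B_plus:
  "empty_left_part (tensor_map id B_plus X) = tensor_map id B_plus (empty_left_part X)"
  by (rule is_linear_eqI[OF is_linear_compose[OF is_linear_empty_left_part is_linear_tensor_map]
        is_linear_compose[OF is_linear_tensor_map is_linear_empty_left_part]])
    (auto simp: empty_left_part_single is_linear_0[OF is_linear_tensor_map])

lemma empty_left_part_cut_sum: "empty_left_part (cut_sum t) = Poly_Mapping.single ({#}, {#t#}) 1"
proof (induction t)
  case (Node D)
  have "empty_left_part (Poly_Mapping.single ({#c#}, {#}) 1 + cut_sum c)
      = Poly_Mapping.single ({#}, {#c#}) 1" if "c \<in># D" for c
    using Node[OF that] by (simp add: is_linear_add[OF is_linear_empty_left_part] empty_left_part_single)
  then have "empty_left_part (cut_sum (Node D)) = tensor_map id B_plus (\<Prod>c\<in>#D. Poly_Mapping.single ({#}, {#c#}) 1)"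
    by (simp add: cut_sum_Node empty_left_part_tensor_map_B_plus empty_left_part_prod_mset
        cong: image_mset_cong)
  also have "(\<Prod>c\<in>#D. Poly_Mapping.single ({#}, {#c#}) 1) = (Poly_Mapping.single ({#}, D) 1 :: HH)"
    by (induction D) (simp_all add: one_HH_eq_single mult_single)
  finally show ?case by (simp add: forest_def tensor_one_single)
qed

lemma Delta_tree_eq_cut_sum: "Delta_tree t = Poly_Mapping.single ({#t#}, {#}) 1 + cut_sum t"
proof -
  let ?f = "\<lambda>(P, R). Poly_Mapping.single (P, {#R#}) (1::rat)"
  have "(\<Sum>x\<in>#A. ?f x) = empty_left_part (\<Sum>x\<in>#A. ?f x)
      + (\<Sum>x\<in>#filter_mset (\<lambda>(P, R). P \<noteq> {#}) A. ?f x)" for A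
    by (induction A) (auto simp: is_linear_add[OF is_linear_empty_left_part] is_linear_0[OF is_linear_empty_left_part]
        empty_left_part_single)
  from this[of "cuts t"] have "cut_sum t = Poly_Mapping.single ({#}, {#t#}) 1
      + (\<Sum>x\<in>#filter_mset (\<lambda>(P, R). P \<noteq> {#}) (cuts t). ?f x)"
    unfolding cut_sum_def[symmetric] empty_left_part_cut_sum .
  then show ?thesis
    by (simp add: Delta_tree_def)
qed

lemma Delta_tree_Node:
  "Delta_tree (Node D) = tensor (forest {#Node D#}) 1 + tensor_map id B_plus (Delta_forest D)"
proof -
  have "Delta_forest D = (\<Prod>c\<in>#D. Poly_Mapping.single ({#c#}, {#}) 1 + cut_sum c)"
    unfolding Delta_forest_def by (simp add: Delta_tree_eq_cut_sum cong: image_mset_cong)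
  then show ?thesis
    by (simp only: Delta_tree_eq_cut_sum cut_sum_Node forest_def tensor_single_one)
qed

lemma Delta_B_plus: "Delta (B_plus x) = tensor (B_plus x) 1 + tensor_map id B_plus (Delta x)"
proof (rule is_linear_eqI[OF is_linear_compose[OF is_linear_Delta is_linear_B_plus]
      is_linear_compose_add[OF is_linear_compose[OF is_linear_tensor_left is_linear_B_plus]
        is_linear_compose[OF is_linear_tensor_map is_linear_Delta]]])
  fix F
  have "Delta (B_plus (Poly_Mapping.single F 1)) = Delta_tree (Node F)"
    by (simp add: Delta_forest_add_mset)
  then show "Delta (B_plus (Poly_Mapping.single F 1))
      = tensor (B_plus (Poly_Mapping.single F 1)) 1 + tensor_map id B_plus (Delta (Poly_Mapping.single F 1))"
    by (simp add: Delta_tree_Node forest_def)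
qed

section \<open>Grafting onto every vertex\<close>

lemma weight_empty [simp]: "weight {#} = 0"
  by (simp add: weight_def)

lemma weight_union: "weight (A + B) = weight A + weight B"
  by (simp add: weight_def)

lemma weight_eq_0_iff: "weight N = 0 \<longleftrightarrow> N = {#}"
proof -
  have "weight_tree t \<noteq> 0" for t
    by (cases t) simp
  then show ?thesis
    by (cases N) (simp_all add: weight_def)
qed

definition graft_sum :: "forest \<Rightarrow> H \<Rightarrow> H" where
  "graft_sum M = lin_ext (\<lambda>N. \<Sum>N'\<in>#graft M N. forest N')"

lemma is_linear_graft_sum: "is_linear (graft_sum M)"
  unfolding graft_sum_def by (rule is_linear_lin_ext)

lemma graft_sum_forest: "graft_sum M (forest N) = (\<Sum>N'\<in>#graft M N. forest N')"
  by (simp add: graft_sum_def forest_def)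

lemma graft_sum_one [simp]: "graft_sum M 1 = 0"
  by (simp add: one_H_eq_forest graft_sum_forest graft_def)

lemma graft_union:
  "graft M (A + B) = image_mset (\<lambda>X. X + B) (graft M A) + image_mset (\<lambda>X. A + X) (graft M B)"
proof -
  have "A + B - {#t#} = A - {#t#} + B" if "t \<in># A" for t
    using that by (metis add_mset_remove_trivial insert_DiffM union_mset_add_mset_left)
  moreover have "A + B - {#t#} = A + (B - {#t#})" if "t \<in># B" for t
    using that by (metis add_mset_remove_trivial insert_DiffM union_mset_add_mset_right)
  ultimately show ?thesis
    unfolding graft_def
    by (simp add: image_mset_sum_mset image_mset.compositionality o_def cong: image_mset_cong)
qed

lemma graft_sum_forest_union:
  "graft_sum M (forest (A + B)) = graft_sum M (forest A) * forest B + forest A * graft_sum M (forest B)"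
  by (simp add: graft_sum_forest graft_union sum_mset_distrib_left sum_mset_distrib_right forest_mult
      image_mset.compositionality o_def add.commute)

lemma graft_sum_mult: "graft_sum M (x * y) = graft_sum M x * y + x * graft_sum M y"
  by (rule is_bilinear_eqI[where F = "\<lambda>x y. graft_sum M (x * y)"])
    (simp_all add: graft_sum_forest_union[unfolded forest_def] mult_single
      is_linear_compose[OF is_linear_graft_sum is_linear_mult_left]
      is_linear_compose[OF is_linear_graft_sum is_linear_mult_right]
      is_linear_compose_add[OF is_linear_compose[OF is_linear_mult_left is_linear_graft_sum] is_linear_mult_left]
      is_linear_compose_add[OF is_linear_mult_right is_linear_compose[OF is_linear_mult_right is_linear_graft_sum]])

lemma graft_sum_B_plus:
  "graft_sum M (forest {#Node C#}) = forest {#Node (C + M)#} + B_plus (graft_sum M (forest C))"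
proof -
  have "B_plus (graft_sum M (forest C)) = (\<Sum>N'\<in>#graft M C. forest {#Node N'#})"
    by (simp add: graft_sum_forest is_linear_sum_mset[OF is_linear_B_plus])
  then show ?thesis
    by (simp add: graft_sum_forest graft_def sum_mset_sum_mset_image image_mset.compositionality o_def)
qed

lemma replicate_mset_add: "replicate_mset (m + n) x = replicate_mset m x + replicate_mset n x"
  by (induction m) auto

lemma replicate_mset_sum_mset: "(\<Sum>c\<in>#C. replicate_mset (f c) x) = replicate_mset (\<Sum>c\<in>#C. f c) x"
  by (induction C) (auto simp: replicate_mset_add)

lemma graft_tree_empty: "graft_tree {#} t = replicate_mset (weight_tree t) t"
proof (induction t)
  case (Node C)
  have "(\<Sum>c\<in>#C. image_mset (\<lambda>t'. Node (add_mset t' (C - {#c#}))) (graft_tree {#} c))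
      = (\<Sum>c\<in>#C. replicate_mset (weight_tree c) (Node C))"
    by (rule arg_cong[where f = sum_mset], rule image_mset_cong) (simp add: Node insert_DiffM)
  then show ?case by (simp add: replicate_mset_sum_mset)
qed

lemma graft_empty: "graft {#} N = replicate_mset (weight N) N"
proof -
  have "graft {#} N = (\<Sum>t\<in>#N. replicate_mset (weight_tree t) N)"
    unfolding graft_def
    by (rule arg_cong[where f = sum_mset], rule image_mset_cong) (simp add: graft_tree_empty insert_DiffM)
  then show ?thesis by (simp add: replicate_mset_sum_mset weight_def)
qed

lemma graft_sum_empty_forest: "graft_sum {#} (forest N) = Poly_Mapping.single N (of_nat (weight N))"
proof -
  have "(\<Sum>N'\<in>#replicate_mset n N. forest N') = Poly_Mapping.single N (of_nat n)" for n
    by (induction n) (simp_all add: forest_def single_add[symmetric])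
  then show ?thesis
    by (simp add: graft_sum_forest graft_empty)
qed

section \<open>The coproduct of a grafting\<close>

(* The terms of \<Delta>(g_M y) in which the grafting vertex stays in the root part:
   split_graft (\<Delta>M) (\<Delta>y) = \<Sum> M'y' \<otimes> g_M''(y''). *)
definition split_graft :: "HH \<Rightarrow> HH \<Rightarrow> HH" where
  "split_graft X Y = lin_ext (\<lambda>(P, M). lin_ext (\<lambda>(Q, R).
     tensor (forest (P + Q)) (graft_sum M (forest R))) Y) X"

lemma split_graft_single:
  "split_graft (Poly_Mapping.single (P, M) 1) (Poly_Mapping.single (Q, R) 1)
     = tensor (forest (P + Q)) (graft_sum M (forest R))"
  by (simp add: split_graft_def)

lemma is_linear_split_graft_left: "is_linear (\<lambda>X. split_graft X Y)"
  unfolding split_graft_def by (rule is_linear_lin_ext)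

lemma is_linear_split_graft_right: "is_linear (split_graft X)"
  unfolding is_linear_def split_graft_def
  by (simp add: lin_ext_add lin_ext_scal lin_ext_fun_add lin_ext_fun_scal case_prod_unfold)

lemma split_graft_mult_right: "split_graft X (Y * Z) = split_graft X Y * Z + Y * split_graft X Z"
proof (rule is_linear_eqI[where F = "\<lambda>X. split_graft X (Y * Z)"])
  show "is_linear (\<lambda>X. split_graft X (Y * Z))" "is_linear (\<lambda>X. split_graft X Y * Z + Y * split_graft X Z)"
    by (simp_all add: is_linear_split_graft_left
        is_linear_compose_add[OF is_linear_compose[OF is_linear_mult_left is_linear_split_graft_left]
          is_linear_compose[OF is_linear_mult_right is_linear_split_graft_left]])
  fix k :: "forest \<times> forest"
  obtain P M where k: "k = (P, M)" by (cases k)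
  show "split_graft (Poly_Mapping.single k 1) (Y * Z)
      = split_graft (Poly_Mapping.single k 1) Y * Z + Y * split_graft (Poly_Mapping.single k 1) Z"
  proof (rule is_bilinear_eqI[where F = "\<lambda>Y Z. split_graft (Poly_Mapping.single k 1) (Y * Z)"])
    fix l m :: "forest \<times> forest"
    obtain Q R where l: "l = (Q, R)" by (cases l)
    obtain Q' R' where m: "m = (Q', R')" by (cases m)
    have "split_graft (Poly_Mapping.single k 1) (Poly_Mapping.single l 1 * Poly_Mapping.single m 1)
        = tensor (forest (P + Q + Q')) (graft_sum M (forest R) * forest R' + forest R * graft_sum M (forest R'))"
      by (simp add: k l m mult_single split_graft_single graft_sum_forest_union add.assoc)
    also have "\<dots> = tensor (forest (P + Q)) (graft_sum M (forest R)) * tensor (forest Q') (forest R')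
        + tensor (forest Q) (forest R) * tensor (forest (P + Q')) (graft_sum M (forest R'))"
      by (simp only: tensor_mult forest_mult tensor_add_right add_ac)
    finally show "split_graft (Poly_Mapping.single k 1) (Poly_Mapping.single l 1 * Poly_Mapping.single m 1)
        = split_graft (Poly_Mapping.single k 1) (Poly_Mapping.single l 1) * Poly_Mapping.single m 1
        + Poly_Mapping.single l 1 * split_graft (Poly_Mapping.single k 1) (Poly_Mapping.single m 1)"
      by (simp add: k l m split_graft_single)
  qed (simp_all add:
      is_linear_compose[OF is_linear_split_graft_right is_linear_mult_left]
      is_linear_compose[OF is_linear_split_graft_right is_linear_mult_right]
      is_linear_compose_add[OF is_linear_compose[OF is_linear_mult_left is_linear_split_graft_right] is_linear_mult_left]
      is_linear_compose_add[OF is_linear_mult_right is_linear_compose[OF is_linear_mult_right is_linear_split_graft_right]])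
qed

lemma split_graft_tensor_one: "split_graft X (tensor x 1) = 0"
proof (rule is_bilinear_eqI[where F = "\<lambda>X x. split_graft X (tensor x 1)" and G = "\<lambda>_ _. 0"])
  fix k :: "forest \<times> forest" and Q :: forest
  show "split_graft (Poly_Mapping.single k 1) (tensor (Poly_Mapping.single Q 1) 1) = 0"
    by (cases k) (simp add: tensor_single_one split_graft_single graft_sum_forest graft_def)
qed (simp_all add: is_linear_split_graft_left is_linear_const_0
    is_linear_compose[OF is_linear_split_graft_right is_linear_tensor_left])

lemma split_graft_one: "split_graft X 1 = 0"
  using split_graft_tensor_one[of X 1] by (simp add: tensor_one_one)

lemma split_graft_B_plus:
  "split_graft X (tensor_map id B_plus Y) = tensor_map id B_plus (X * Y + split_graft X Y)"
proof (rule is_bilinear_eqI[where F = "\<lambda>X Y. split_graft X (tensor_map id B_plus Y)"])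
  fix k l :: "forest \<times> forest"
  obtain P M where k: "k = (P, M)" by (cases k)
  obtain Q R where l: "l = (Q, R)" by (cases l)
  show "split_graft (Poly_Mapping.single k 1) (tensor_map id B_plus (Poly_Mapping.single l 1))
      = tensor_map id B_plus (Poly_Mapping.single k 1 * Poly_Mapping.single l 1
          + split_graft (Poly_Mapping.single k 1) (Poly_Mapping.single l 1))"
    by (simp add: k l split_graft_single graft_sum_B_plus mult_single is_linear_add[OF is_linear_tensor_map]
        tensor_map_tensor is_linear_id is_linear_B_plus tensor_add_right add.commute)
qed (simp_all add: is_linear_split_graft_left
    is_linear_compose[OF is_linear_split_graft_right is_linear_tensor_map]
    is_linear_compose[OF is_linear_tensor_map is_linear_compose_add[OF is_linear_mult_left is_linear_split_graft_left]]
    is_linear_compose[OF is_linear_tensor_map is_linear_compose_add[OF is_linear_mult_right is_linear_split_graft_right]])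

lemma tensor_map_graft_sum_mult:
  "tensor_map (graft_sum M) id (Y * Z) = tensor_map (graft_sum M) id Y * Z + Y * tensor_map (graft_sum M) id Z"
proof (rule is_bilinear_eqI[where F = "\<lambda>Y Z. tensor_map (graft_sum M) id (Y * Z)"])
  fix l m :: "forest \<times> forest"
  obtain Q R where l: "l = (Q, R)" by (cases l)
  obtain Q' R' where m: "m = (Q', R')" by (cases m)
  have "tensor_map (graft_sum M) id (Poly_Mapping.single l 1 * Poly_Mapping.single m 1)
      = tensor (graft_sum M (forest Q) * forest Q' + forest Q * graft_sum M (forest Q')) (forest R * forest R')"
    by (simp add: l m mult_single graft_sum_forest_union forest_mult)
  also have "\<dots> = tensor (graft_sum M (forest Q)) (forest R) * tensor (forest Q') (forest R')
      + tensor (forest Q) (forest R) * tensor (graft_sum M (forest Q')) (forest R')"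
    by (simp only: tensor_mult tensor_add_left)
  finally show "tensor_map (graft_sum M) id (Poly_Mapping.single l 1 * Poly_Mapping.single m 1)
      = tensor_map (graft_sum M) id (Poly_Mapping.single l 1) * Poly_Mapping.single m 1
      + Poly_Mapping.single l 1 * tensor_map (graft_sum M) id (Poly_Mapping.single m 1)"
    by (simp add: l m)
qed (simp_all add:
    is_linear_compose[OF is_linear_tensor_map is_linear_mult_left]
    is_linear_compose[OF is_linear_tensor_map is_linear_mult_right]
    is_linear_compose_add[OF is_linear_compose[OF is_linear_mult_left is_linear_tensor_map] is_linear_mult_left]
    is_linear_compose_add[OF is_linear_mult_right is_linear_compose[OF is_linear_mult_right is_linear_tensor_map]])

lemma tensor_map_one: "tensor_map f g 1 = tensor (f 1) (g 1)"
  by (simp add: one_HH_eq_single one_H_eq_forest)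

lemma Delta_graft_sum_forest_of_trees:
  assumes "\<And>t. t \<in># N \<Longrightarrow> Delta (graft_sum M (forest {#t#}))
      = split_graft X (Delta_forest {#t#}) + tensor_map (graft_sum M) id (Delta_forest {#t#})"
  shows "Delta (graft_sum M (forest N))
      = split_graft X (Delta_forest N) + tensor_map (graft_sum M) id (Delta_forest N)"
  using assms
proof (induction N)
  case empty
  then show ?case
    by (simp add: one_H_eq_forest[symmetric] split_graft_one tensor_map_one is_linear_0[OF is_linear_Delta])
next
  case (add t N)
  let ?T = "Delta_forest {#t#}" and ?N = "Delta_forest N"
  have T: "Delta (graft_sum M (forest {#t#})) = split_graft X ?T + tensor_map (graft_sum M) id ?T"
    by (rule add.prems) simp
  have N: "Delta (graft_sum M (forest N)) = split_graft X ?N + tensor_map (graft_sum M) id ?N"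
    by (rule add.IH) (rule add.prems, simp)
  have "Delta (graft_sum M (forest (add_mset t N)))
      = Delta (graft_sum M (forest {#t#})) * ?N + ?T * Delta (graft_sum M (forest N))"
    unfolding forest_mult[of "{#t#}" N, simplified, symmetric] graft_sum_mult
    by (simp only: Delta_mult is_linear_add[OF is_linear_Delta] Delta_forest)
  also have "\<dots> = (split_graft X ?T + tensor_map (graft_sum M) id ?T) * ?N
      + ?T * (split_graft X ?N + tensor_map (graft_sum M) id ?N)"
    by (simp only: T N)
  also have "\<dots> = split_graft X (?T * ?N) + tensor_map (graft_sum M) id (?T * ?N)"
    by (simp add: split_graft_mult_right tensor_map_graft_sum_mult algebra_simps)
  finally show ?case
    by (simp only: Delta_forest_add_mset Delta_forest_empty mult_1_right)
qed

lemma tensor_map_graft_sum_B_plus: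
  "tensor_map (graft_sum M) id (tensor_map id B_plus Y) = tensor_map id B_plus (tensor_map (graft_sum M) id Y)"
  by (simp add: tensor_map_compose is_linear_graft_sum is_linear_B_plus is_linear_id)

lemma Delta_graft_sum_tree:
  "Delta (graft_sum M (forest {#t#}))
     = split_graft (Delta_forest M) (Delta_forest {#t#}) + tensor_map (graft_sum M) id (Delta_forest {#t#})"
proof (induction t)
  case (Node C)
  let ?X = "Delta_forest M" and ?C = "Delta_forest C" and ?g = "graft_sum M"
  have IH: "Delta (?g (forest C)) = split_graft ?X ?C + tensor_map ?g id ?C"
    by (rule Delta_graft_sum_forest_of_trees) (rule Node)
  have "Delta (?g (forest {#Node C#}))
      = Delta_forest {#Node (C + M)#} + Delta (B_plus (?g (forest C)))"
    by (simp add: graft_sum_B_plus is_linear_add[OF is_linear_Delta] Delta_forest)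
  also have "\<dots> = tensor (forest {#Node (C + M)#}) 1 + tensor_map id B_plus (?C * ?X)
      + tensor (B_plus (?g (forest C))) 1 + tensor_map id B_plus (split_graft ?X ?C + tensor_map ?g id ?C)"
    by (simp only: Delta_forest_add_mset Delta_tree_Node Delta_B_plus IH Delta_forest_union
        Delta_forest_empty mult_1_right add.assoc)
  also have "\<dots> = split_graft ?X (Delta_forest {#Node C#}) + tensor_map ?g id (Delta_forest {#Node C#})"
    by (simp add: Delta_forest_add_mset Delta_tree_Node is_linear_add[OF is_linear_split_graft_right]
        is_linear_add[OF is_linear_tensor_map] split_graft_tensor_one split_graft_B_plus tensor_map_tensor
        is_linear_graft_sum is_linear_id tensor_map_graft_sum_B_plus graft_sum_B_plus tensor_add_left
        mult.commute)
  finally show ?case .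
qed

lemma Delta_graft_sum:
  "Delta (graft_sum M y) = split_graft (Delta_forest M) (Delta y) + tensor_map (graft_sum M) id (Delta y)"
proof (rule is_linear_eqI[OF is_linear_compose[OF is_linear_Delta is_linear_graft_sum]
      is_linear_compose_add[OF is_linear_compose[OF is_linear_split_graft_right is_linear_Delta]
        is_linear_compose[OF is_linear_tensor_map is_linear_Delta]]])
  fix N
  have "Delta (graft_sum M (forest N))
      = split_graft (Delta_forest M) (Delta_forest N) + tensor_map (graft_sum M) id (Delta_forest N)"
    by (rule Delta_graft_sum_forest_of_trees) (rule Delta_graft_sum_tree)
  then show "Delta (graft_sum M (Poly_Mapping.single N 1)) = split_graft (Delta_forest M)
      (Delta (Poly_Mapping.single N 1)) + tensor_map (graft_sum M) id (Delta (Poly_Mapping.single N 1))"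
    by (simp only: forest_def Delta_single scal_1)
qed

section \<open>Homogeneity and primitive elements\<close>

definition homogeneous :: "nat \<Rightarrow> HH \<Rightarrow> bool" where
  "homogeneous n X \<longleftrightarrow> (\<forall>k\<in>Poly_Mapping.keys X. weight (fst k) + weight (snd k) = n)"

lemma homogeneous_single: "weight P + weight Q = n \<Longrightarrow> homogeneous n (Poly_Mapping.single (P, Q) c)"
  unfolding homogeneous_def by simp

lemma homogeneous_add: "homogeneous n X \<Longrightarrow> homogeneous n Y \<Longrightarrow> homogeneous n (X + Y)"
  unfolding homogeneous_def using keys_add[of X Y] by blast

lemma homogeneous_mult:
  assumes "homogeneous a X" "homogeneous b Y"
  shows "homogeneous (a + b) (X * Y)"
  unfolding homogeneous_def
proof
  fix k
  assume "k \<in> Poly_Mapping.keys (X * Y)"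
  then obtain u v where k: "k = u + v" and "u \<in> Poly_Mapping.keys X" "v \<in> Poly_Mapping.keys Y"
    using keys_mult by blast
  with assms have "weight (fst u) + weight (snd u) = a" "weight (fst v) + weight (snd v) = b"
    by (simp_all add: homogeneous_def)
  then show "weight (fst k) + weight (snd k) = a + b"
    by (simp add: k weight_union)
qed

lemma homogeneous_lin_ext:
  assumes "\<And>k. k \<in> Poly_Mapping.keys X \<Longrightarrow> homogeneous n (f k)"
  shows "homogeneous n (lin_ext f X)"
proof -
  have "Poly_Mapping.keys (lin_ext f X) \<subseteq> (\<Union>k\<in>Poly_Mapping.keys X. Poly_Mapping.keys (f k))"
    unfolding lin_ext_def using keys_sum keys_scal by fastforce
  with assms show ?thesis
    unfolding homogeneous_def by blast
qed

lemma homogeneous_tensor_map_B_plus: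
  "homogeneous n X \<Longrightarrow> homogeneous (Suc n) (tensor_map id B_plus X)"
  unfolding tensor_map_def
  by (rule homogeneous_lin_ext) (auto simp: homogeneous_def forest_def weight_def)

lemma homogeneous_Delta_forest_of_trees:
  assumes "\<And>t. t \<in># N \<Longrightarrow> homogeneous (weight_tree t) (Delta_tree t)"
  shows "homogeneous (weight N) (Delta_forest N)"
  using assms
proof (induction N)
  case empty
  show ?case by (simp add: one_HH_eq_single homogeneous_single weight_def)
next
  case (add t N)
  then have "homogeneous (weight_tree t + weight N) (Delta_tree t * Delta_forest N)"
    by (intro homogeneous_mult) auto
  then show ?case
    by (simp add: Delta_forest_add_mset weight_def)
qed

lemma homogeneous_Delta_tree: "homogeneous (weight_tree t) (Delta_tree t)"
proof (induction t)
  case (Node C)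
  have "homogeneous (weight C) (Delta_forest C)"
    by (rule homogeneous_Delta_forest_of_trees) (rule Node)
  then show ?case
    by (auto simp: Delta_tree_Node weight_def forest_def tensor_single_one
        intro!: homogeneous_add homogeneous_single homogeneous_tensor_map_B_plus)
qed

lemma homogeneous_Delta_forest: "homogeneous (weight N) (Delta_forest N)"
  by (rule homogeneous_Delta_forest_of_trees) (rule homogeneous_Delta_tree)


lemma lookup_Delta_forest_empty:
  "Poly_Mapping.lookup (Delta_forest N) ({#}, {#}) = (if N = {#} then 1 else 0)"
proof (cases "N = {#}")
  case True
  then show ?thesis by (simp add: one_HH_eq_single)
next
  case False
  then have "({#}, {#}) \<notin> Poly_Mapping.keys (Delta_forest N)"
    using homogeneous_Delta_forest[of N] weight_eq_0_iff[of N]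
    by (auto simp: homogeneous_def)
  with False show ?thesis by (simp add: in_keys_iff)
qed

lemma sum_keys_lookup_delta:
  "(\<Sum>a\<in>Poly_Mapping.keys x. Poly_Mapping.lookup x a * (if a = c then r else 0))
     = Poly_Mapping.lookup x c * (r :: rat)"
proof -
  have "(\<Sum>a\<in>Poly_Mapping.keys x. Poly_Mapping.lookup x a * (if a = c then r else 0))
      = (\<Sum>a\<in>Poly_Mapping.keys x. if a = c then Poly_Mapping.lookup x c * r else 0)"
    by (rule sum.cong) auto
  then show ?thesis
    by (simp add: in_keys_iff)
qed

(* The coefficient of 1 \<otimes> 1 in rDelta p is minus the constant term of p. *)
lemma primitive_lookup_empty:
  assumes "primitive p"
  shows "Poly_Mapping.lookup p {#} = 0"
proof -
  have "Poly_Mapping.lookup (Delta p) ({#}, {#}) = Poly_Mapping.lookup p {#}"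
    by (simp add: Delta_lin_ext lookup_lin_ext lookup_Delta_forest_empty sum_keys_lookup_delta)
  moreover have "Poly_Mapping.lookup (tensor 1 p) ({#}, {#}) = Poly_Mapping.lookup p {#}"
    and "Poly_Mapping.lookup (tensor p 1) ({#}, {#}) = Poly_Mapping.lookup p {#}"
    by (simp_all add: is_linear_eq_lin_ext[OF is_linear_tensor_right, of 1 p]
        is_linear_eq_lin_ext[OF is_linear_tensor_left, of p] tensor_one_single tensor_single_one
        lookup_lin_ext lookup_single when_def sum_keys_lookup_delta)
  moreover have "Poly_Mapping.lookup (rDelta p) ({#}, {#}) = 0"
    using assms by (simp add: primitive_def)
  ultimately show ?thesis
    by (simp add: rDelta_def lookup_minus)
qed

(* Since 1/0 = 0, the empty forest is sent to 0, matching top_forest M {#} = 0. *)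
definition normalize_weight :: "H \<Rightarrow> H" where
  "normalize_weight = lin_ext (\<lambda>N. scal (1 / of_nat (weight N)) (forest N))"

definition normalize_weight_tensor :: "HH \<Rightarrow> HH" where
  "normalize_weight_tensor =
     lin_ext (\<lambda>(P, Q). scal (1 / of_nat (weight P + weight Q)) (Poly_Mapping.single (P, Q) 1))"

lemma is_linear_normalize_weight: "is_linear normalize_weight"
  unfolding normalize_weight_def by (rule is_linear_lin_ext)

lemma is_linear_normalize_weight_tensor: "is_linear normalize_weight_tensor"
  unfolding normalize_weight_tensor_def by (rule is_linear_lin_ext)

lemma normalize_weight_tensor_homogeneous:
  assumes "homogeneous n X"
  shows "normalize_weight_tensor X = scal (1 / of_nat n) X"
proof -
  have "normalize_weight_tensor X = lin_ext (\<lambda>k. scal (1 / of_nat n) (Poly_Mapping.single k 1)) X"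
    unfolding normalize_weight_tensor_def
    by (rule lin_ext_cong) (use assms in \<open>auto simp: homogeneous_def\<close>)
  then show ?thesis
    by (simp only: lin_ext_fun_scal lin_ext_single_1)
qed

lemma Delta_normalize_weight: "Delta (normalize_weight y) = normalize_weight_tensor (Delta y)"
  by (rule is_linear_eqI[OF is_linear_compose[OF is_linear_Delta is_linear_normalize_weight]
        is_linear_compose[OF is_linear_normalize_weight_tensor is_linear_Delta]])
    (simp add: normalize_weight_def is_linear_scal[OF is_linear_Delta] Delta_forest
      normalize_weight_tensor_homogeneous[OF homogeneous_Delta_forest])

lemma tensor_one_normalize_weight: "tensor 1 (normalize_weight y) = normalize_weight_tensor (tensor 1 y)"
  by (rule is_linear_eqI[OF is_linear_compose[OF is_linear_tensor_right is_linear_normalize_weight]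
        is_linear_compose[OF is_linear_normalize_weight_tensor is_linear_tensor_right]])
    (simp add: normalize_weight_def tensor_scal_right tensor_one_single forest_def normalize_weight_tensor_def)

lemma tensor_normalize_weight_one: "tensor (normalize_weight y) 1 = normalize_weight_tensor (tensor y 1)"
  by (rule is_linear_eqI[OF is_linear_compose[OF is_linear_tensor_left is_linear_normalize_weight]
        is_linear_compose[OF is_linear_normalize_weight_tensor is_linear_tensor_left]])
    (simp add: normalize_weight_def tensor_scal_left tensor_single_one forest_def normalize_weight_tensor_def)

lemma primitive_normalize_weight: "primitive y \<Longrightarrow> primitive (normalize_weight y)"
  by (simp add: primitive_def rDelta_def Delta_normalize_weight tensor_one_normalize_weight
      tensor_normalize_weight_one is_linear_diff[OF is_linear_normalize_weight_tensor, symmetric]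
      is_linear_0[OF is_linear_normalize_weight_tensor])

section \<open>The product top\<close>

definition graft_by :: "H \<Rightarrow> H \<Rightarrow> H" where
  "graft_by x q = lin_ext (\<lambda>M. graft_sum M q) x"

lemma is_linear_graft_by_left: "is_linear (\<lambda>x. graft_by x q)"
  unfolding graft_by_def by (rule is_linear_lin_ext)

lemma is_linear_graft_by_right: "is_linear (graft_by x)"
  unfolding is_linear_def graft_by_def
  by (simp add: is_linear_add[OF is_linear_graft_sum] is_linear_scal[OF is_linear_graft_sum]
      lin_ext_fun_add lin_ext_fun_scal)

lemma graft_by_single [simp]: "graft_by (Poly_Mapping.single M c) q = scal c (graft_sum M q)"
  by (simp add: graft_by_def)

lemma graft_by_forest [simp]: "graft_by (forest M) q = graft_sum M q"
  by (simp add: forest_def)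

lemma is_linear_tensor_map_graft_by: "is_linear (\<lambda>q. tensor_map f (\<lambda>x. graft_by x q) X)"
  unfolding is_linear_def tensor_map_def
  by (simp add: case_prod_unfold is_linear_add[OF is_linear_graft_by_right] is_linear_scal[OF is_linear_graft_by_right]
      tensor_add_right tensor_scal_right lin_ext_fun_add lin_ext_fun_scal)

lemma split_graft_tensor_one_left: "split_graft X (tensor 1 q) = tensor_map id (\<lambda>x. graft_by x q) X"
proof (rule is_bilinear_eqI[where F = "\<lambda>X q. split_graft X (tensor 1 q)"])
  fix k :: "forest \<times> forest" and N :: forest
  show "split_graft (Poly_Mapping.single k 1) (tensor 1 (Poly_Mapping.single N 1))
      = tensor_map id (\<lambda>x. graft_by x (Poly_Mapping.single N 1)) (Poly_Mapping.single k 1)"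
    by (cases k) (simp add: tensor_one_single split_graft_single forest_def)
qed (simp_all add: is_linear_split_graft_left is_linear_tensor_map is_linear_tensor_map_graft_by
    is_linear_compose[OF is_linear_split_graft_right is_linear_tensor_right])

lemma Delta_graft_sum_primitive:
  assumes "primitive q"
  shows "Delta (graft_sum M q) = tensor_map id (\<lambda>x. graft_by x q) (Delta_forest M) + tensor (graft_sum M q) 1"
  using assms
  by (simp add: Delta_graft_sum Delta_primitive
      is_linear_add[OF is_linear_split_graft_right] is_linear_add[OF is_linear_tensor_map]
      split_graft_tensor_one_left split_graft_tensor_one tensor_map_tensor is_linear_graft_sum is_linear_id)

lemma rDelta_graft_by_primitive:
  assumes "primitive q"
  shows "rDelta (graft_by x q) = tensor x (graft_by 1 q) + tensor_map id (\<lambda>x. graft_by x q) (rDelta x)"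
proof -
  have "Delta (graft_by x q) = tensor_map id (\<lambda>x. graft_by x q) (Delta x) + tensor (graft_by x q) 1"
    by (rule is_linear_eqI[OF is_linear_compose[OF is_linear_Delta is_linear_graft_by_left]
          is_linear_compose_add[OF is_linear_compose[OF is_linear_tensor_map is_linear_Delta]
            is_linear_compose[OF is_linear_tensor_left is_linear_graft_by_left]]])
      (simp add: Delta_graft_sum_primitive[OF assms] is_linear_scal[OF is_linear_Delta]
        is_linear_scal[OF is_linear_tensor_map] tensor_scal_left)
  then show ?thesis
    by (simp add: rDelta_def[of "graft_by x q"] Delta_eq_rDelta[of x] is_linear_add[OF is_linear_tensor_map]
        tensor_map_tensor is_linear_id is_linear_graft_by_left)
qed

lemma top_eq_graft_by: "top x y = graft_by x (normalize_weight y)"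
proof -
  have "top x y = lin_ext (\<lambda>M. lin_ext (top_forest M) y) x"
    unfolding top_def lin_ext_def by (simp add: scal_sum)
  moreover have "lin_ext (top_forest M) y = graft_sum M (normalize_weight y)" for M
    by (rule is_linear_eqI[OF is_linear_lin_ext is_linear_compose[OF is_linear_graft_sum is_linear_normalize_weight]])
      (simp add: top_forest_def normalize_weight_def is_linear_scal[OF is_linear_graft_sum] graft_sum_forest)
  ultimately show ?thesis
    by (simp add: graft_by_def)
qed

lemma is_linear_top_left: "is_linear (\<lambda>x. top x y)"
  by (simp add: top_eq_graft_by is_linear_graft_by_left)

lemma graft_by_one_normalize_weight:
  assumes "Poly_Mapping.lookup p {#} = 0"
  shows "graft_by 1 (normalize_weight p) = p"
proof -
  have "graft_by 1 (normalize_weight p) = graft_sum {#} (normalize_weight p)"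
    by (simp add: one_H_eq_forest)
  also have "\<dots> = lin_ext (\<lambda>N. graft_sum {#} (normalize_weight (Poly_Mapping.single N 1))) p"
    by (rule is_linear_eq_lin_ext[OF is_linear_compose[OF is_linear_graft_sum is_linear_normalize_weight]])
  also have "\<dots> = lin_ext (\<lambda>N. Poly_Mapping.single N 1) p"
    by (rule lin_ext_cong)
      (use assms in \<open>auto simp: normalize_weight_def graft_sum_empty_forest weight_eq_0_iff in_keys_iff
        is_linear_scal[OF is_linear_graft_sum]\<close>)
  finally show ?thesis
    by (simp add: lin_ext_single_1)
qed

lemma rDelta_top_primitive:
  assumes "primitive p"
  shows "rDelta (top x p) = tensor x p + tensor_map id (\<lambda>y. top y p) (rDelta x)"
  by (simp add: top_eq_graft_by rDelta_graft_by_primitive primitive_normalize_weight assms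
      graft_by_one_normalize_weight primitive_lookup_empty)

lemma rDelta_itop:
  assumes "\<And>j. k \<le> j \<Longrightarrow> j \<le> k + n \<Longrightarrow> primitive (p j)"
  shows "rDelta (itop p k n) = (\<Sum>j = k..<k + n. tensor (itop p (j + 1) (k + n - j - 1)) (itop p k (j - k)))"
  using assms
proof (induction n arbitrary: k)
  case 0
  then show ?case by (simp add: primitive_def)
next
  case (Suc n)
  let ?X = "itop p (Suc k) n"
  have IH: "rDelta ?X = (\<Sum>j = Suc k..<Suc k + n.
      tensor (itop p (j + 1) (Suc k + n - j - 1)) (itop p (Suc k) (j - Suc k)))"
    by (rule Suc.IH) (use Suc.prems in simp)
  have "rDelta (itop p k (Suc n)) = tensor ?X (p k) + tensor_map id (\<lambda>y. top y (p k)) (rDelta ?X)"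
    using Suc.prems by (simp add: rDelta_top_primitive)
  also have "tensor_map id (\<lambda>y. top y (p k)) (rDelta ?X) = (\<Sum>j = Suc k..<Suc k + n.
      tensor (itop p (j + 1) (Suc k + n - j - 1)) (top (itop p (Suc k) (j - Suc k)) (p k)))"
    by (simp only: IH is_linear_sum[OF is_linear_tensor_map] tensor_map_tensor[OF is_linear_id is_linear_top_left]
        id_apply)
  also have "\<dots> = (\<Sum>j = Suc k..<k + Suc n. tensor (itop p (j + 1) (k + Suc n - j - 1)) (itop p k (j - k)))"
  proof (rule sum.cong)
    fix j
    assume "j \<in> {Suc k..<k + Suc n}"
    then have "Suc k \<le> j"
      by simp
    then have "j - k = Suc (j - Suc k)"
      by simp
    then show "tensor (itop p (j + 1) (Suc k + n - j - 1)) (top (itop p (Suc k) (j - Suc k)) (p k))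
        = tensor (itop p (j + 1) (k + Suc n - j - 1)) (itop p k (j - k))"
      by simp
  qed simp
  finally show ?case
    by (simp add: sum.atLeast_Suc_lessThan)
qed

theorem lemma4p3:
  fixes p :: "nat \<Rightarrow> H" and i :: nat
  assumes "i \<ge> 1"
    and "\<forall>j\<in>{1..i}. primitive (p j)"
  shows "rDelta (itop p 1 (i - 1)) =
    (\<Sum>j = 1..i - 1. tensor (itop p (j + 1) (i - j - 1)) (itop p 1 (j - 1)))"
proof -
  have "rDelta (itop p 1 (i - 1))
      = (\<Sum>j = 1..<1 + (i - 1). tensor (itop p (j + 1) (1 + (i - 1) - j - 1)) (itop p 1 (j - 1)))"
    by (rule rDelta_itop) (use assms in auto)
  also have "\<dots> = (\<Sum>j = 1..i - 1. tensor (itop p (j + 1) (i - j - 1)) (itop p 1 (j - 1)))"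
    using assms(1) by (intro sum.cong) auto
  finally show ?thesis .
qed

end
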